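(* For perfectly normal spaces $X$, the following properties are pairwise equivalent: CCC; selectively $2$-star-ccc; selectively $\omega$-star-ccc; weakly Lindelöf; weakly star-Lindelöf; weakly $\omega$-star-Lindelöf; weakly strongly star-Lindelöf; weakly strongly $\omega$-star-Lindelöf; star-Lindelöf; $\omega$-star-Lindelöf; strongly $2$-star-Lindelöf; strongly $\omega$-star-Lindelöf (and hence so is every property that is implied by one of these and implies another of these).
   Context: For $B\subseteq X$ and a family $\mathcal{U}$ of subsets of $X$: $\operatorname{st}^1(B,\mathcal{U})=\bigcup\{U\in\mathcal{U}:U\cap B\neq\emptyset\}$, $\operatorname{st}^{n+1}(B,\mathcal{U})=\bigcup\{U\in\mathcal{U}:U\cap\operatorname{st}^n(B,\mathcal{U})\neq\emptyset\}$. CCC: every pairwise disjoint family of open sets is countable. Weakly Lindelöf: every open cover $\mathcal{U}$ has a countable $\mathcal{V}\subseteq\mathcal{U}$ with $\overline{\bigcup\mathcal{V}}=X$. For $k\in\mathbb{N}^+$: $X$ is $k$-star-Lindelöf (resp. strongly $k$-star-Lindelöf) if every open cover $\mathcal{U}$ admits a countable $\mathcal{V}\subseteq\mathcal{U}$ (resp. countable $B\subseteq X$) with $\operatorname{st}^k(\bigcup\mathcal{V},\mathcal{U})=X$ (resp. $\operatorname{st}^k(B,\mathcal{U})=X$); weakly $k$-star-Lindelöf (resp. weakly strongly $k$-star-Lindelöf) is the same with the conclusion replaced by density: $\overline{\operatorname{st}^k(\bigcup\mathcal{V},\mathcal{U})}=X$ (resp. $\overline{\operatorname{st}^k(B,\mathcal{U})}=X$).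 The $\omega$-versions are defined the same way except that for each open cover one only requires some $k\in\mathbb{N}^+$ (depending on the cover) together with the countable $\mathcal{V}$ or $B$. "Star-Lindelöf", "weakly star-Lindelöf" and "weakly strongly star-Lindelöf" mean the case $k=1$. $X$ is selectively $k$-star-ccc if for every open cover $\mathcal{U}$ and every sequence $(\mathcal{A}_n:n\in\omega)$ of maximal pairwise disjoint families of open sets there is $(A_n\in\mathcal{A}_n:n\in\omega)$ with $\operatorname{st}^k(\bigcup_n A_n,\mathcal{U})=X$; selectively $\omega$-star-ccc is the same but with some $k\in\mathbb{N}^+$ (depending on $\mathcal{U}$ and the sequence) allowed. *)

theory Defs
  imports "HOL-Analysis.Analysis"
begin

text \<open>Perfectly normal (Engelking convention): T1, normal, every closed set is a G-delta.\<close>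
definition perfectly_normal :: "'a topology \<Rightarrow> bool" where
  "perfectly_normal X \<longleftrightarrow> t1_space X \<and> normal_space X \<and> (\<forall>F. closedin X F \<longrightarrow> gdelta_in X F)"

definition open_cover :: "'a topology \<Rightarrow> 'a set set \<Rightarrow> bool" where
  "open_cover X \<U> \<longleftrightarrow> (\<forall>U\<in>\<U>. openin X U) \<and> \<Union>\<U> = topspace X"

text \<open>Iterated star: st 0 B U = B, st (n+1) B U = union of members of U meeting st n B U.
  For k >= 1 this is the paper's st^k.\<close>
fun st :: "nat \<Rightarrow> 'a set \<Rightarrow> 'a set set \<Rightarrow> 'a set" where
  "st 0 B \<U> = B"
| "st (Suc n) B \<U> = \<Union>{U\<in>\<U>. U \<inter> st n B \<U> \<noteq> {}}"

definition ccc :: "'a topology \<Rightarrow> bool" where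
  "ccc X \<longleftrightarrow> (\<forall>\<A>. (\<forall>A\<in>\<A>. openin X A) \<and> pairwise disjnt \<A> \<longrightarrow> countable \<A>)"

definition weakly_lindelof :: "'a topology \<Rightarrow> bool" where
  "weakly_lindelof X \<longleftrightarrow> (\<forall>\<U>. open_cover X \<U> \<longrightarrow>
     (\<exists>\<V>\<subseteq>\<U>. countable \<V> \<and> X closure_of (\<Union>\<V>) = topspace X))"

definition k_star_lindelof :: "nat \<Rightarrow> 'a topology \<Rightarrow> bool" where
  "k_star_lindelof k X \<longleftrightarrow> (\<forall>\<U>. open_cover X \<U> \<longrightarrow>
     (\<exists>\<V>\<subseteq>\<U>. countable \<V> \<and> st k (\<Union>\<V>) \<U> = topspace X))"

definition strongly_k_star_lindelof :: "nat \<Rightarrow> 'a topology \<Rightarrow> bool" where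
  "strongly_k_star_lindelof k X \<longleftrightarrow> (\<forall>\<U>. open_cover X \<U> \<longrightarrow>
     (\<exists>B\<subseteq>topspace X. countable B \<and> st k B \<U> = topspace X))"

definition weakly_k_star_lindelof :: "nat \<Rightarrow> 'a topology \<Rightarrow> bool" where
  "weakly_k_star_lindelof k X \<longleftrightarrow> (\<forall>\<U>. open_cover X \<U> \<longrightarrow>
     (\<exists>\<V>\<subseteq>\<U>. countable \<V> \<and> X closure_of (st k (\<Union>\<V>) \<U>) = topspace X))"

definition weakly_strongly_k_star_lindelof :: "nat \<Rightarrow> 'a topology \<Rightarrow> bool" where
  "weakly_strongly_k_star_lindelof k X \<longleftrightarrow> (\<forall>\<U>. open_cover X \<U> \<longrightarrow>
     (\<exists>B\<subseteq>topspace X. countable B \<and> X closure_of (st k B \<U>) = topspace X))"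

definition omega_star_lindelof :: "'a topology \<Rightarrow> bool" where
  "omega_star_lindelof X \<longleftrightarrow> (\<forall>\<U>. open_cover X \<U> \<longrightarrow>
     (\<exists>k\<ge>1. \<exists>\<V>\<subseteq>\<U>. countable \<V> \<and> st k (\<Union>\<V>) \<U> = topspace X))"

definition strongly_omega_star_lindelof :: "'a topology \<Rightarrow> bool" where
  "strongly_omega_star_lindelof X \<longleftrightarrow> (\<forall>\<U>. open_cover X \<U> \<longrightarrow>
     (\<exists>k\<ge>1. \<exists>B\<subseteq>topspace X. countable B \<and> st k B \<U> = topspace X))"

definition weakly_omega_star_lindelof :: "'a topology \<Rightarrow> bool" where
  "weakly_omega_star_lindelof X \<longleftrightarrow> (\<forall>\<U>. open_cover X \<U> \<longrightarrow>
     (\<exists>k\<ge>1. \<exists>\<V>\<subseteq>\<U>. countable \<V> \<and> X closure_of (st k (\<Union>\<V>) \<U>) = topspace X))"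

definition weakly_strongly_omega_star_lindelof :: "'a topology \<Rightarrow> bool" where
  "weakly_strongly_omega_star_lindelof X \<longleftrightarrow> (\<forall>\<U>. open_cover X \<U> \<longrightarrow>
     (\<exists>k\<ge>1. \<exists>B\<subseteq>topspace X. countable B \<and> X closure_of (st k B \<U>) = topspace X))"

definition max_disjoint_open :: "'a topology \<Rightarrow> 'a set set \<Rightarrow> bool" where
  "max_disjoint_open X \<A> \<longleftrightarrow>
     (\<forall>A\<in>\<A>. openin X A \<and> A \<noteq> {}) \<and> pairwise disjnt \<A> \<and>
     (\<forall>\<B>. \<A> \<subseteq> \<B> \<and> (\<forall>B\<in>\<B>. openin X B \<and> B \<noteq> {}) \<and> pairwise disjnt \<B> \<longrightarrow> \<B> = \<A>)"

definition selectively_k_star_ccc :: "nat \<Rightarrow> 'a topology \<Rightarrow> bool" where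
  "selectively_k_star_ccc k X \<longleftrightarrow> (\<forall>\<U> \<A>. open_cover X \<U> \<and> (\<forall>n::nat. max_disjoint_open X (\<A> n)) \<longrightarrow>
     (\<exists>A. (\<forall>n. A n \<in> \<A> n) \<and> st k (\<Union>n. A n) \<U> = topspace X))"

definition selectively_omega_star_ccc :: "'a topology \<Rightarrow> bool" where
  "selectively_omega_star_ccc X \<longleftrightarrow> (\<forall>\<U> \<A>. open_cover X \<U> \<and> (\<forall>n::nat. max_disjoint_open X (\<A> n)) \<longrightarrow>
     (\<exists>k\<ge>1. \<exists>A. (\<forall>n. A n \<in> \<A> n) \<and> st k (\<Union>n. A n) \<U> = topspace X))"

end

theory Submission
  imports Defs
begin

text \<open>
  In a ccc space every open cover \<open>\<U>\<close> is refined by a maximal disjoint family of nonempty open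
  sets, which is countable and has dense union. Points chosen in its members, the members of \<open>\<U>\<close>
  containing them, or members of given maximal disjoint families meeting them witness all the
  positive properties.

  Conversely, let \<open>\<F>\<close> be an uncountable disjoint family of nonempty open sets and \<open>F\<close> the
  complement of its union. As \<open>F\<close> is a \<open>G\<^sub>\<delta>\<close>, some open \<open>G \<supseteq> F\<close> fails to contain uncountably
  many members \<open>A \<in> \<I>\<close> of \<open>\<F>\<close>, and normality gives open sets \<open>F \<subseteq> K j\<close> with
  \<open>cl (K j) \<subseteq> K (j + 1) \<inter> G\<close>. Give each \<open>A \<in> \<I>\<close> a height \<open>N A\<close>, every height being taken
  uncountably often, and cut \<open>A\<close> into layers between consecutive \<open>K j\<close> up to height \<open>N A\<close>. In
  the resulting open cover the \<open>k\<close>-th star of a set disjoint from \<open>A\<close> stays inside \<open>K (k + 1)\<close>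
  on \<open>A\<close> when \<open>k \<le> N A\<close>, so it misses the nonempty open set \<open>A - cl (K (k + 1))\<close>. Hence a
  dense \<open>k\<close>-th star must start from a set meeting uncountably many members of \<open>\<I>\<close>, which
  excludes every countable witness.
\<close>

section \<open>Iterated stars\<close>

lemma st_Suc_subset_topspace:
  assumes "open_cover X \<U>"
  shows "st (Suc n) B \<U> \<subseteq> topspace X"
  using assms unfolding open_cover_def by auto

lemma st_mono:
  assumes "B \<subseteq> C"
  shows "st n B \<U> \<subseteq> st n C \<U>"
  by (induction n) (use assms in auto)

lemma st_st: "st m (st n B \<U>) \<U> = st (m + n) B \<U>"
  by (induction m) auto

lemma st_Suc_eq_topspace:
  assumes cover: "open_cover X \<U>" and dense: "X closure_of (st n B \<U>) = topspace X"
  shows "st (Suc n) B \<U> = topspace X"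
proof
  show "topspace X \<subseteq> st (Suc n) B \<U>"
  proof
    fix x assume "x \<in> topspace X"
    then obtain U where "U \<in> \<U>" "x \<in> U" "openin X U"
      using cover unfolding open_cover_def by blast
    with dense have "U \<inter> st n B \<U> \<noteq> {}"
      unfolding dense_intersects_open by blast
    with \<open>U \<in> \<U>\<close> \<open>x \<in> U\<close> show "x \<in> st (Suc n) B \<U>" by auto
  qed
qed (rule st_Suc_subset_topspace[OF cover])

section \<open>Maximal disjoint families\<close>

lemma exists_maximal_pairwise_superset:
  assumes "pairwise R \<A>\<^sub>0" "\<A>\<^sub>0 \<subseteq> \<P>"
  obtains \<A> where "\<A>\<^sub>0 \<subseteq> \<A>" "\<A> \<subseteq> \<P>" "pairwise R \<A>"
    "\<And>\<B>. \<A> \<subseteq> \<B> \<Longrightarrow> \<B> \<subseteq> \<P> \<Longrightarrow> pairwise R \<B> \<Longrightarrow> \<B> = \<A>"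
proof -
  let ?Z = "{\<A>. \<A>\<^sub>0 \<subseteq> \<A> \<and> \<A> \<subseteq> \<P> \<and> pairwise R \<A>}"
  have "\<exists>\<A>\<in>?Z. \<forall>\<B>\<in>?Z. \<A> \<subseteq> \<B> \<longrightarrow> \<B> = \<A>"
  proof (rule subset_Zorn_nonempty)
    show "?Z \<noteq> {}"
      using assms by blast
  next
    fix \<C> assume "\<C> \<noteq> {}" and chain: "subset.chain ?Z \<C>"
    then have "pairwise R (\<Union>\<C>)"
      by (intro pairwise_chain_Union[of \<C> R]) (auto simp: subset_chain_def chain_subset_def)
    with \<open>\<C> \<noteq> {}\<close> chain show "\<Union>\<C> \<in> ?Z"
      unfolding subset_chain_def by blast
  qed
  then obtain \<A> where "\<A> \<in> ?Z" and max: "\<forall>\<B>\<in>?Z. \<A> \<subseteq> \<B> \<longrightarrow> \<B> = \<A>"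
    by blast
  show thesis
  proof (rule that)
    show "\<A>\<^sub>0 \<subseteq> \<A>" "\<A> \<subseteq> \<P>" "pairwise R \<A>"
      using \<open>\<A> \<in> ?Z\<close> by simp_all
  next
    fix \<B> assume "\<A> \<subseteq> \<B>" "\<B> \<subseteq> \<P>" "pairwise R \<B>"
    with \<open>\<A> \<in> ?Z\<close> max show "\<B> = \<A>"
      by blast
  qed
qed

lemma max_disjoint_open_superset:
  assumes "\<And>A. A \<in> \<A>\<^sub>0 \<Longrightarrow> openin X A \<and> A \<noteq> {}" "pairwise disjnt \<A>\<^sub>0"
  obtains \<A> where "\<A>\<^sub>0 \<subseteq> \<A>" "max_disjoint_open X \<A>"
proof -
  let ?\<P> = "{A. openin X A \<and> A \<noteq> {}}"
  obtain \<A> where "\<A>\<^sub>0 \<subseteq> \<A>" "\<A> \<subseteq> ?\<P>" "pairwise disjnt \<A>"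
    and max: "\<And>\<B>. \<A> \<subseteq> \<B> \<Longrightarrow> \<B> \<subseteq> ?\<P> \<Longrightarrow> pairwise disjnt \<B> \<Longrightarrow> \<B> = \<A>"
    using exists_maximal_pairwise_superset[OF assms(2), of ?\<P>] assms(1) by blast
  have "max_disjoint_open X \<A>"
    unfolding max_disjoint_open_def
    using \<open>\<A> \<subseteq> ?\<P>\<close> \<open>pairwise disjnt \<A>\<close> max by blast
  with \<open>\<A>\<^sub>0 \<subseteq> \<A>\<close> show thesis
    by (rule that)
qed

lemma max_disjoint_open_meets:
  assumes max: "max_disjoint_open X \<A>" and T: "openin X T" "T \<noteq> {}"
  shows "\<exists>A\<in>\<A>. A \<inter> T \<noteq> {}"
proof (rule ccontr)
  assume "\<not> (\<exists>A\<in>\<A>. A \<inter> T \<noteq> {})"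
  then have "\<forall>A\<in>\<A>. disjnt T A"
    by (auto simp: disjnt_def)
  then have "pairwise disjnt (insert T \<A>)"
    using max unfolding max_disjoint_open_def by (auto simp: pairwise_insert disjnt_sym)
  then have "insert T \<A> = \<A>"
    using max T unfolding max_disjoint_open_def by blast
  with \<open>\<forall>A\<in>\<A>. disjnt T A\<close> T(2) show False
    by (auto simp: disjnt_def)
qed

section \<open>Consequences of ccc\<close>

lemma dense_st_1_if_meets_refinement:
  assumes "open_cover X \<U>" "X closure_of \<Union>\<B> = topspace X"
    and "\<And>B. B \<in> \<B> \<Longrightarrow> (\<exists>U\<in>\<U>. B \<subseteq> U) \<and> B \<inter> T \<noteq> {}"
  shows "X closure_of (st 1 T \<U>) = topspace X"
proof
  show "X closure_of (st 1 T \<U>) \<subseteq> topspace X"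
    by (rule closure_of_subset_topspace)
  have "\<Union>\<B> \<subseteq> st 1 T \<U>"
    using assms(3) by fastforce
  then show "topspace X \<subseteq> X closure_of (st 1 T \<U>)"
    using assms(2) closure_of_mono by blast
qed

lemma ccc_countable_dense_refinement:
  assumes ccc: "ccc X" and \<U>: "open_cover X \<U>"
  obtains \<B> where "countable \<B>" "\<And>B. B \<in> \<B> \<Longrightarrow> openin X B \<and> B \<noteq> {} \<and> (\<exists>U\<in>\<U>. B \<subseteq> U)"
    "X closure_of \<Union>\<B> = topspace X"
proof -
  let ?\<P> = "{B. openin X B \<and> B \<noteq> {} \<and> (\<exists>U\<in>\<U>. B \<subseteq> U)}"
  obtain \<B> where \<B>: "\<B> \<subseteq> ?\<P>" "pairwise disjnt \<B>"
    and max: "\<And>\<C>. \<B> \<subseteq> \<C> \<Longrightarrow> \<C> \<subseteq> ?\<P> \<Longrightarrow> pairwise disjnt \<C> \<Longrightarrow> \<C> = \<B>"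
    by (rule exists_maximal_pairwise_superset[of disjnt "{}" ?\<P>]) auto
  have "X closure_of \<Union>\<B> = topspace X"
    unfolding dense_intersects_open
  proof (intro allI impI)
    fix T assume T: "openin X T \<and> T \<noteq> {}"
    show "\<Union>\<B> \<inter> T \<noteq> {}"
    proof
      assume disj: "\<Union>\<B> \<inter> T = {}"
      obtain x where "x \<in> T"
        using T by blast
      then obtain U where "U \<in> \<U>" "x \<in> U"
        using T \<U> openin_subset unfolding open_cover_def by blast
      with T \<U> \<open>x \<in> T\<close> have "T \<inter> U \<in> ?\<P>"
        unfolding open_cover_def by (auto intro: openin_Int)
      moreover have "pairwise disjnt (insert (T \<inter> U) \<B>)"
        using \<B>(2) disj by (auto simp: pairwise_insert disjnt_def)
      ultimately have "insert (T \<inter> U) \<B> = \<B>"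
        using max[of "insert (T \<inter> U) \<B>"] \<B>(1) by blast
      with disj \<open>x \<in> T\<close> \<open>x \<in> U\<close> show False
        by blast
    qed
  qed
  show thesis
  proof (rule that)
    show "countable \<B>"
      using ccc \<B> unfolding ccc_def by blast
    show "\<And>B. B \<in> \<B> \<Longrightarrow> openin X B \<and> B \<noteq> {} \<and> (\<exists>U\<in>\<U>. B \<subseteq> U)"
      using \<B>(1) by blast
  qed fact
qed

lemma ccc_imp_weakly_lindelof:
  assumes "ccc X"
  shows "weakly_lindelof X"
  unfolding weakly_lindelof_def
proof (intro allI impI)
  fix \<U> assume \<U>: "open_cover X \<U>"
  obtain \<B> where "countable \<B>" and \<B>: "\<And>B. B \<in> \<B> \<Longrightarrow> openin X B \<and> B \<noteq> {} \<and> (\<exists>U\<in>\<U>. B \<subseteq> U)"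
    and dense: "X closure_of \<Union>\<B> = topspace X"
    by (rule ccc_countable_dense_refinement[OF assms \<U>]) auto
  obtain f where f: "\<And>B. B \<in> \<B> \<Longrightarrow> f B \<in> \<U> \<and> B \<subseteq> f B"
    using \<B> by metis
  have "X closure_of \<Union>(f ` \<B>) = topspace X"
  proof
    show "X closure_of \<Union>(f ` \<B>) \<subseteq> topspace X"
      by (rule closure_of_subset_topspace)
    have "\<Union>\<B> \<subseteq> \<Union>(f ` \<B>)"
      using f by blast
    then show "topspace X \<subseteq> X closure_of \<Union>(f ` \<B>)"
      using dense closure_of_mono by blast
  qed
  moreover have "f ` \<B> \<subseteq> \<U>" "countable (f ` \<B>)"
    using f \<open>countable \<B>\<close> by auto
  ultimately show "\<exists>\<V>\<subseteq>\<U>. countable \<V> \<and> X closure_of \<Union>\<V> = topspace X"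
    by blast
qed

lemma ccc_imp_weakly_strongly_k_star_lindelof_1:
  assumes "ccc X"
  shows "weakly_strongly_k_star_lindelof 1 X"
  unfolding weakly_strongly_k_star_lindelof_def
proof (intro allI impI)
  fix \<U> assume \<U>: "open_cover X \<U>"
  obtain \<B> where "countable \<B>" and \<B>: "\<And>B. B \<in> \<B> \<Longrightarrow> openin X B \<and> B \<noteq> {} \<and> (\<exists>U\<in>\<U>. B \<subseteq> U)"
    and dense: "X closure_of \<Union>\<B> = topspace X"
    by (rule ccc_countable_dense_refinement[OF assms \<U>]) auto
  obtain q where q: "\<And>B. B \<in> \<B> \<Longrightarrow> q B \<in> B"
    using \<B> by (metis all_not_in_conv)
  have "q ` \<B> \<subseteq> topspace X"
    using q \<B> openin_subset by blast
  moreover have "countable (q ` \<B>)"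
    using \<open>countable \<B>\<close> by blast
  moreover have "X closure_of (st 1 (q ` \<B>) \<U>) = topspace X"
    using \<U> dense by (rule dense_st_1_if_meets_refinement) (use \<B> q in blast)
  ultimately show "\<exists>B\<subseteq>topspace X. countable B \<and> X closure_of (st 1 B \<U>) = topspace X"
    by blast
qed

lemma ccc_imp_selectively_k_star_ccc_2:
  assumes "ccc X" and "topspace X \<noteq> {}"
  shows "selectively_k_star_ccc 2 X"
  unfolding selectively_k_star_ccc_def
proof (intro allI impI, elim conjE)
  fix \<U> and \<A> :: "nat \<Rightarrow> 'a set set"
  assume \<U>: "open_cover X \<U>" and \<A>: "\<forall>n. max_disjoint_open X (\<A> n)"
  obtain \<B> where "countable \<B>" and \<B>: "\<And>B. B \<in> \<B> \<Longrightarrow> openin X B \<and> B \<noteq> {} \<and> (\<exists>U\<in>\<U>. B \<subseteq> U)"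
    and dense: "X closure_of \<Union>\<B> = topspace X"
    by (rule ccc_countable_dense_refinement[OF assms(1) \<U>]) auto
  have "\<B> \<noteq> {}"
  proof
    assume "\<B> = {}"
    then have "X closure_of \<Union>\<B> = {}"
      by simp
    with dense assms(2) show False
      by argo
  qed
  define b where "b = from_nat_into \<B>"
  have "range b = \<B>"
    unfolding b_def using \<open>\<B> \<noteq> {}\<close> \<open>countable \<B>\<close> by (rule range_from_nat_into)
  have "\<exists>A\<in>\<A> n. A \<inter> b n \<noteq> {}" for n
    using \<open>range b = \<B>\<close> \<B> \<A> by (intro max_disjoint_open_meets) auto
  then obtain A where A: "\<And>n. A n \<in> \<A> n \<and> A n \<inter> b n \<noteq> {}"
    by metis
  have "X closure_of (st 1 (\<Union>n. A n) \<U>) = topspace X"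
    using \<U> dense
  proof (rule dense_st_1_if_meets_refinement)
    fix B assume "B \<in> \<B>"
    then obtain n where "B = b n"
      using \<open>range b = \<B>\<close> by blast
    with A[of n] \<B> \<open>B \<in> \<B>\<close> show "(\<exists>U\<in>\<U>. B \<subseteq> U) \<and> B \<inter> (\<Union>n. A n) \<noteq> {}"
      by blast
  qed
  then have "st (Suc 1) (\<Union>n. A n) \<U> = topspace X"
    by (rule st_Suc_eq_topspace[OF \<U>])
  with A show "\<exists>A. (\<forall>n. A n \<in> \<A> n) \<and> st 2 (\<Union>n. A n) \<U> = topspace X"
    by (metis Suc_1)
qed

section \<open>Implications between the covering properties\<close>

lemma weakly_k_star_lindelof_0_iff: "weakly_k_star_lindelof 0 X \<longleftrightarrow> weakly_lindelof X"
  by (simp add: weakly_k_star_lindelof_def weakly_lindelof_def)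

lemma weakly_k_star_lindelof_imp_k_star_lindelof_Suc:
  assumes "weakly_k_star_lindelof k X"
  shows "k_star_lindelof (Suc k) X"
  using assms st_Suc_eq_topspace
  unfolding weakly_k_star_lindelof_def k_star_lindelof_def by metis

lemma weakly_strongly_k_star_lindelof_imp_strongly_Suc:
  assumes "weakly_strongly_k_star_lindelof k X"
  shows "strongly_k_star_lindelof (Suc k) X"
  using assms st_Suc_eq_topspace
  unfolding weakly_strongly_k_star_lindelof_def strongly_k_star_lindelof_def by metis

lemma weakly_omega_star_lindelof_imp_weakly_strongly:
  assumes "weakly_omega_star_lindelof X"
  shows "weakly_strongly_omega_star_lindelof X"
  unfolding weakly_strongly_omega_star_lindelof_def
proof (intro allI impI)
  fix \<U> assume \<U>: "open_cover X \<U>"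
  then obtain k \<V> where "\<V> \<subseteq> \<U>" "countable \<V>" and dense: "X closure_of (st k (\<Union>\<V>) \<U>) = topspace X"
    using assms unfolding weakly_omega_star_lindelof_def by blast
  obtain q where q: "\<And>V. V \<in> \<V> - {{}} \<Longrightarrow> q V \<in> V"
    by (metis Diff_iff all_not_in_conv singletonI)
  have "q ` (\<V> - {{}}) \<subseteq> topspace X"
    using q \<open>\<V> \<subseteq> \<U>\<close> \<U> unfolding open_cover_def by blast
  moreover have "countable (q ` (\<V> - {{}}))"
    using \<open>countable \<V>\<close> by blast
  moreover have "X closure_of (st (Suc k) (q ` (\<V> - {{}})) \<U>) = topspace X"
  proof
    show "X closure_of (st (Suc k) (q ` (\<V> - {{}})) \<U>) \<subseteq> topspace X"
      by (rule closure_of_subset_topspace)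
    have "\<Union>\<V> \<subseteq> st 1 (q ` (\<V> - {{}})) \<U>"
      using q \<open>\<V> \<subseteq> \<U>\<close> by fastforce
    then have "st k (\<Union>\<V>) \<U> \<subseteq> st k (st 1 (q ` (\<V> - {{}})) \<U>) \<U>"
      by (rule st_mono)
    also have "\<dots> = st (Suc k) (q ` (\<V> - {{}})) \<U>"
      by (subst st_st) simp
    finally show "topspace X \<subseteq> X closure_of (st (Suc k) (q ` (\<V> - {{}})) \<U>)"
      using dense closure_of_mono by blast
  qed
  ultimately show "\<exists>k\<ge>1. \<exists>B\<subseteq>topspace X. countable B \<and> X closure_of (st k B \<U>) = topspace X"
    by (intro exI[of _ "Suc k"]) auto
qed

lemma k_star_properties_imp_omega:
  assumes "1 \<le> k"
  shows "k_star_lindelof k X \<Longrightarrow> omega_star_lindelof X"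
    and "weakly_k_star_lindelof k X \<Longrightarrow> weakly_omega_star_lindelof X"
    and "strongly_k_star_lindelof k X \<Longrightarrow> strongly_omega_star_lindelof X"
    and "weakly_strongly_k_star_lindelof k X \<Longrightarrow> weakly_strongly_omega_star_lindelof X"
    and "selectively_k_star_ccc k X \<Longrightarrow> selectively_omega_star_ccc X"
  using assms
  unfolding k_star_lindelof_def omega_star_lindelof_def weakly_k_star_lindelof_def
    weakly_omega_star_lindelof_def strongly_k_star_lindelof_def strongly_omega_star_lindelof_def
    weakly_strongly_k_star_lindelof_def weakly_strongly_omega_star_lindelof_def
    selectively_k_star_ccc_def selectively_omega_star_ccc_def
  by metis+

lemma star_properties_imp_weakly:
  shows "k_star_lindelof k X \<Longrightarrow> weakly_k_star_lindelof k X"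
    and "omega_star_lindelof X \<Longrightarrow> weakly_omega_star_lindelof X"
    and "strongly_omega_star_lindelof X \<Longrightarrow> weakly_strongly_omega_star_lindelof X"
proof -
  show "k_star_lindelof k X \<Longrightarrow> weakly_k_star_lindelof k X"
    unfolding k_star_lindelof_def weakly_k_star_lindelof_def by (metis closure_of_topspace)
  show "omega_star_lindelof X \<Longrightarrow> weakly_omega_star_lindelof X"
    unfolding omega_star_lindelof_def weakly_omega_star_lindelof_def
    by (metis closure_of_topspace)
  show "strongly_omega_star_lindelof X \<Longrightarrow> weakly_strongly_omega_star_lindelof X"
    unfolding strongly_omega_star_lindelof_def weakly_strongly_omega_star_lindelof_def
    by (metis closure_of_topspace)
qed

section \<open>Perfectly normal spaces that are not ccc\<close>

lemma countable_members_meeting_Union: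
  assumes "countable \<G>" and "\<And>G. G \<in> \<G> \<Longrightarrow> \<exists>A. {B\<in>\<A>. G \<inter> B \<noteq> {}} \<subseteq> {A}"
  shows "countable {B\<in>\<A>. \<Union>\<G> \<inter> B \<noteq> {}}"
proof -
  have "countable {B\<in>\<A>. G \<inter> B \<noteq> {}}" if "G \<in> \<G>" for G
    using assms(2)[OF that] by (metis countable_empty countable_insert countable_subset)
  then have "countable (\<Union>G\<in>\<G>. {B\<in>\<A>. G \<inter> B \<noteq> {}})"
    using assms(1) by blast
  moreover have "{B\<in>\<A>. \<Union>\<G> \<inter> B \<noteq> {}} = (\<Union>G\<in>\<G>. {B\<in>\<A>. G \<inter> B \<noteq> {}})"
    by blast
  ultimately show ?thesis
    by simp
qed

lemma pairwise_disjnt_meeting_subset: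
  assumes "pairwise disjnt \<A>" "A \<in> \<A>" "G \<subseteq> A"
  shows "{B\<in>\<A>. G \<inter> B \<noteq> {}} \<subseteq> {A}"
  using assms unfolding pairwise_def disjnt_def by blast

lemma not_ccc_obtains_uncountable_disjoint:
  assumes "\<not> ccc X"
  obtains \<F> where "\<And>A. A \<in> \<F> \<Longrightarrow> openin X A \<and> A \<noteq> {}" "pairwise disjnt \<F>" "\<not> countable \<F>"
proof -
  obtain \<A> where \<A>: "\<forall>A\<in>\<A>. openin X A" "pairwise disjnt \<A>" "\<not> countable \<A>"
    using assms unfolding ccc_def by blast
  have "pairwise disjnt (\<A> - {{}})"
    using \<A>(2) by (rule pairwise_subset) blast
  moreover have "\<not> countable (\<A> - {{}})"
    using \<A>(3) countable_subset[of \<A> "insert {} (\<A> - {{}})"] by blast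
  moreover have "\<And>A. A \<in> \<A> - {{}} \<Longrightarrow> openin X A \<and> A \<noteq> {}"
    using \<A>(1) by blast
  ultimately show thesis
    by (intro that[of "\<A> - {{}}"]) auto
qed

lemma gdelta_in_uncountable_not_subset:
  assumes "gdelta_in X F" "\<not> countable \<A>" "\<And>A. A \<in> \<A> \<Longrightarrow> \<not> A \<subseteq> F"
  obtains G where "openin X G" "F \<subseteq> G" "\<not> countable {A\<in>\<A>. \<not> A \<subseteq> G}"
proof -
  obtain C :: "nat \<Rightarrow> 'a set" where C: "\<And>n. openin X (C n)" "\<Inter>(range C) = F"
    using assms(1) unfolding gdelta_in_descending by blast
  have \<A>_subset: "\<A> \<subseteq> (\<Union>n. {A\<in>\<A>. \<not> A \<subseteq> C n})"
  proof
    fix A assume "A \<in> \<A>"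
    with assms(3) C(2) obtain n where "\<not> A \<subseteq> C n"
      by blast
    with \<open>A \<in> \<A>\<close> show "A \<in> (\<Union>n. {A\<in>\<A>. \<not> A \<subseteq> C n})"
      by blast
  qed
  have "\<exists>n. \<not> countable {A\<in>\<A>. \<not> A \<subseteq> C n}"
  proof (rule ccontr)
    assume "\<nexists>n. \<not> countable {A\<in>\<A>. \<not> A \<subseteq> C n}"
    then have "countable (\<Union>n. {A\<in>\<A>. \<not> A \<subseteq> C n})"
      by (intro countable_UN) auto
    with \<A>_subset assms(2) show False
      using countable_subset by blast
  qed
  then obtain n where "\<not> countable {A\<in>\<A>. \<not> A \<subseteq> C n}"
    by blast
  moreover have "F \<subseteq> C n"
    using C(2) by blast
  ultimately show thesis
    using C(1) by (intro that[of "C n"])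
qed

lemma normal_space_open_chain:
  assumes "normal_space X" "closedin X F" "openin X G" "F \<subseteq> G"
  obtains K where "\<And>j. openin X (K j)" "\<And>j. F \<subseteq> K j" "\<And>j. X closure_of (K j) \<subseteq> G"
    "\<And>j. X closure_of (K j) \<subseteq> K (Suc j)"
proof -
  have between: "\<exists>V. openin X V \<and> S \<subseteq> V \<and> X closure_of V \<subseteq> G" if "closedin X S" "S \<subseteq> G" for S
    using assms(1) assms(3) that unfolding normal_space_alt by blast
  let ?P = "\<lambda>(n::nat) V. openin X V \<and> F \<subseteq> V \<and> X closure_of V \<subseteq> G"
  have "\<exists>K. \<forall>n. ?P n (K n) \<and> X closure_of (K n) \<subseteq> K (Suc n)"
  proof (rule dependent_nat_choice)
    show "\<exists>V. ?P 0 V"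
      using between[OF assms(2,4)] by blast
    fix V n assume "?P n V"
    then have "closedin X (F \<union> X closure_of V)" "F \<union> X closure_of V \<subseteq> G"
      using assms(2,4) by auto
    from between[OF this] show "\<exists>W. ?P (Suc n) W \<and> X closure_of V \<subseteq> W"
      by blast
  qed
  then obtain K where K: "\<And>n. ?P n (K n) \<and> X closure_of (K n) \<subseteq> K (Suc n)"
    by blast
  show thesis
    by (rule that[of K]) (use K in blast)+
qed

lemma uncountable_nat_fibres:
  includes cardinal_syntax
  assumes "\<not> countable I"
  obtains N :: "'a \<Rightarrow> nat" where "\<And>k. \<not> countable {a\<in>I. N a = k}"
proof -
  have "infinite I"
    using assms countable_finite by blast
  moreover have "|UNIV::nat set| \<le>o |I|"
    using \<open>infinite I\<close> infinite_iff_card_of_nat by blast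
  ultimately have "|I \<times> (UNIV::nat set)| =o |I|"
    using card_of_Times_infinite[of I "UNIV::nat set"] by auto
  then have "\<exists>h. inj_on h (I \<times> (UNIV::nat set)) \<and> h ` (I \<times> UNIV) \<subseteq> I"
    using card_of_ordLeq ordIso_iff_ordLeq by blast
  then obtain h where h: "inj_on h (I \<times> (UNIV::nat set))" "h ` (I \<times> UNIV) \<subseteq> I"
    by blast
  define N where "N a = snd (inv_into (I \<times> UNIV) h a)" for a
  have "\<not> countable {a\<in>I. N a = k}" for k
  proof
    assume "countable {a\<in>I. N a = k}"
    moreover have "h ` (I \<times> {k}) \<subseteq> {a\<in>I. N a = k}"
      using h by (auto simp: N_def inv_into_f_f)
    ultimately have "countable (h ` (I \<times> {k}))"
      by (rule countable_subset[rotated])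
    moreover have "inj_on h (I \<times> {k})"
      using h(1) by (rule inj_on_subset) blast
    ultimately have "countable (I \<times> {k})"
      by (rule countable_image_inj_on)
    then have "countable (fst ` (I \<times> {k}))"
      by (rule countable_image)
    with assms show False
      by simp
  qed
  then show thesis
    by (rule that)
qed

locale layered_cover =
  fixes X :: "'a topology" and \<F> \<I> :: "'a set set" and K :: "nat \<Rightarrow> 'a set" and N :: "'a set \<Rightarrow> nat"
  assumes open_family: "\<And>A. A \<in> \<F> \<Longrightarrow> openin X A"
    and disjoint_family: "pairwise disjnt \<F>"
    and subfamily: "\<I> \<subseteq> \<F>"
    and open_K: "\<And>j. openin X (K j)"
    and complement_subset_K: "topspace X - \<Union>\<F> \<subseteq> K 1"
    and closure_K_subset: "\<And>j. X closure_of (K j) \<subseteq> K (Suc j)"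
begin

text \<open>
  Consecutive layers of \<open>A\<close> overlap, so together with \<open>K 1\<close> and the top layer they cover \<open>A\<close>;
  yet each layer lies between \<open>K j\<close> and \<open>K (j + 2)\<close>, so one star step advances by at most
  one level inside \<open>A\<close>.
\<close>

definition layer :: "'a set \<Rightarrow> nat \<Rightarrow> 'a set" where
  "layer A j = A \<inter> (K (Suc (Suc j)) - X closure_of (K j))"

definition top_layer :: "'a set \<Rightarrow> 'a set" where
  "top_layer A = A - X closure_of (K (N A))"

definition cover :: "'a set set" where
  "cover = insert (K 1) ((\<F> - \<I>) \<union> {layer A j | A j. A \<in> \<I> \<and> j < N A} \<union> top_layer ` \<I>)"

lemma K_subset_closure: "K j \<subseteq> X closure_of (K j)"
  using open_K by (simp add: closure_of_subset openin_subset)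

lemma K_mono:
  assumes "i \<le> j"
  shows "K i \<subseteq> K j"
proof -
  have "K n \<subseteq> K (Suc n)" for n
    using K_subset_closure closure_K_subset by blast
  then show ?thesis
    using assms by (rule lift_Suc_mono_le)
qed

lemma family_eqI: "A \<in> \<F> \<Longrightarrow> B \<in> \<F> \<Longrightarrow> x \<in> A \<Longrightarrow> x \<in> B \<Longrightarrow> A = B"
  using disjoint_family unfolding pairwise_def disjnt_def by blast

lemma openin_cover: "U \<in> cover \<Longrightarrow> openin X U"
  unfolding cover_def layer_def top_layer_def
  using open_family open_K subfamily by (auto intro!: openin_Int openin_diff)

lemma Int_K_subset_layers: "A \<inter> K (Suc n) \<subseteq> K 1 \<union> (\<Union>j<n. layer A j)"
proof (induction n)
  case (Suc n)
  show ?case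
  proof
    fix x assume x: "x \<in> A \<inter> K (Suc (Suc n))"
    show "x \<in> K 1 \<union> (\<Union>j<Suc n. layer A j)"
    proof (cases "x \<in> X closure_of (K n)")
      case True
      with x closure_K_subset have "x \<in> A \<inter> K (Suc n)"
        by blast
      with Suc.IH show ?thesis
        by auto
    next
      case False
      with x have "x \<in> layer A n"
        unfolding layer_def by blast
      then show ?thesis
        by blast
    qed
  qed
qed simp

lemma cover_memberI:
  shows "K 1 \<in> cover"
    and "A \<in> \<F> \<Longrightarrow> A \<notin> \<I> \<Longrightarrow> A \<in> cover"
    and "A \<in> \<I> \<Longrightarrow> j < N A \<Longrightarrow> layer A j \<in> cover"
    and "A \<in> \<I> \<Longrightarrow> top_layer A \<in> cover"
  unfolding cover_def by blast+

lemma open_cover_cover: "open_cover X cover"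
  unfolding open_cover_def
proof (intro conjI ballI equalityI subsetI)
  show "openin X U" if "U \<in> cover" for U
    using that by (rule openin_cover)
  show "x \<in> topspace X" if "x \<in> \<Union>cover" for x
    using that openin_cover openin_subset by blast
  fix x assume x: "x \<in> topspace X"
  show "x \<in> \<Union>cover"
  proof (cases "x \<in> \<Union>\<F>")
    case False
    with x complement_subset_K cover_memberI(1) show ?thesis
      by blast
  next
    case True
    then obtain A where A: "A \<in> \<F>" "x \<in> A"
      by blast
    consider "A \<notin> \<I>" | "A \<in> \<I>" "x \<notin> X closure_of (K (N A))" | "A \<in> \<I>" "x \<in> X closure_of (K (N A))"
      by blast
    then show ?thesis
    proof cases
      case 1
      with A cover_memberI(2) show ?thesis
        by blast
    next
      case 2
      with A have "x \<in> top_layer A"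
        unfolding top_layer_def by blast
      with 2 cover_memberI(4) show ?thesis
        by blast
    next
      case 3
      with A closure_K_subset have "x \<in> A \<inter> K (Suc (N A))"
        by blast
      then have "x \<in> K 1 \<union> (\<Union>j<N A. layer A j)"
        using Int_K_subset_layers by blast
      with 3 cover_memberI(1,3) show ?thesis
        by blast
    qed
  qed
qed

lemma cover_memberE:
  assumes "U \<in> cover"
  obtains "U = K 1" | "U \<in> \<F>" "U \<notin> \<I>" | A j where "A \<in> \<I>" "j < N A" "U = layer A j"
    | A where "A \<in> \<I>" "U = top_layer A"
  using assms unfolding cover_def by blast

lemma cover_member_meeting:
  assumes U: "U \<in> cover" and A: "A \<in> \<I>" and x: "x \<in> U" "x \<in> A"
  obtains "U = K 1" | j where "j < N A" "U = layer A j" | "U = top_layer A"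
  using U
proof (cases rule: cover_memberE)
  case 1
  then show thesis by (rule that(1))
next
  case 2
  with A x subfamily family_eqI have False
    by blast
  then show thesis ..
next
  case (3 B j)
  with A x subfamily family_eqI have "B = A"
    unfolding layer_def by blast
  with 3 show thesis
    by (intro that(2)) simp_all
next
  case (4 B)
  with A x subfamily family_eqI have "B = A"
    unfolding top_layer_def by blast
  with 4 show thesis
    by (intro that(3)) simp
qed

lemma st_cover_Int_subset_K:
  assumes A: "A \<in> \<I>" and S: "S \<inter> A \<subseteq> K 1"
  shows "i \<le> N A \<Longrightarrow> st i S cover \<inter> A \<subseteq> K (Suc i)"
proof (induction i)
  case (Suc i)
  show ?case
  proof
    fix x assume "x \<in> st (Suc i) S cover \<inter> A"
    then obtain U y where U: "U \<in> cover" "x \<in> U" "x \<in> A" and y: "y \<in> U" "y \<in> st i S cover"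
      by auto
    show "x \<in> K (Suc (Suc i))"
    proof (cases rule: cover_member_meeting[OF U(1) A U(2,3)])
      case 1
      with U K_mono[of 1 "Suc (Suc i)"] show ?thesis by auto
    next
      case (2 j)
      then have "y \<in> K (Suc i)" "y \<notin> K j"
        using Suc y K_subset_closure[of j] unfolding layer_def by auto
      then have "j \<le> i"
        using K_mono[of "Suc i" j] by (meson not_less_eq_eq subsetD)
      with 2 U K_mono[of "Suc (Suc j)" "Suc (Suc i)"] show ?thesis
        unfolding layer_def by auto
    next
      case 3
      then have "y \<in> K (Suc i)" "y \<notin> X closure_of (K (N A))"
        using Suc y unfolding top_layer_def by auto
      with Suc.prems K_mono[of "Suc i" "N A"] K_subset_closure[of "N A"] show ?thesis
        by blast
    qed
  qed
qed (use S in simp)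

end

lemma perfectly_normal_not_ccc_obtains_cover:
  assumes pn: "perfectly_normal X" and not_ccc: "\<not> ccc X"
  obtains \<I> \<U> where "\<And>A. A \<in> \<I> \<Longrightarrow> openin X A \<and> A \<noteq> {}" "pairwise disjnt \<I>" "open_cover X \<U>"
    "\<And>k S. X closure_of (st k S \<U>) = topspace X \<Longrightarrow> \<not> countable {A\<in>\<I>. S \<inter> A \<noteq> {}}"
proof -
  obtain \<F> where \<F>: "\<And>A. A \<in> \<F> \<Longrightarrow> openin X A \<and> A \<noteq> {}" "pairwise disjnt \<F>" "\<not> countable \<F>"
    using not_ccc_obtains_uncountable_disjoint[OF not_ccc] by blast
  define F where "F = topspace X - \<Union>\<F>"
  have "closedin X F"
    unfolding F_def using \<F>(1) by (intro closedin_diff openin_Union) auto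
  have "gdelta_in X F" "normal_space X"
    using pn \<open>closedin X F\<close> unfolding perfectly_normal_def by blast+
  have "\<not> A \<subseteq> F" if "A \<in> \<F>" for A
    using \<F>(1)[OF that] that unfolding F_def by blast
  then obtain G where G: "openin X G" "F \<subseteq> G" "\<not> countable {A\<in>\<F>. \<not> A \<subseteq> G}"
    using gdelta_in_uncountable_not_subset[OF \<open>gdelta_in X F\<close> \<F>(3)] by blast
  define \<I> where "\<I> = {A\<in>\<F>. \<not> A \<subseteq> G}"
  obtain K where K: "\<And>j. openin X (K j)" "\<And>j. F \<subseteq> K j" "\<And>j. X closure_of (K j) \<subseteq> G"
    "\<And>j. X closure_of (K j) \<subseteq> K (Suc j)"
    using normal_space_open_chain[OF \<open>normal_space X\<close> \<open>closedin X F\<close> G(1,2)] by blast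
  have "\<not> countable \<I>"
    using G(3) unfolding \<I>_def .
  then obtain N :: "'a set \<Rightarrow> nat" where N: "\<And>k. \<not> countable {A\<in>\<I>. N A = k}"
    using uncountable_nat_fibres by blast
  interpret layered_cover X \<F> \<I> K N
  proof
    show "topspace X - \<Union>\<F> \<subseteq> K 1"
      using K(2) unfolding F_def by blast
  qed (use \<F> K in \<open>auto simp: \<I>_def\<close>)
  show thesis
  proof (rule that[of \<I> cover])
    show "\<And>A. A \<in> \<I> \<Longrightarrow> openin X A \<and> A \<noteq> {}"
      using \<F>(1) unfolding \<I>_def by blast
    show "pairwise disjnt \<I>"
      using \<F>(2) unfolding \<I>_def by (rule pairwise_subset) blast
    show "open_cover X cover"
      by (rule open_cover_cover)
  next
    fix k S assume dense: "X closure_of (st k S cover) = topspace X"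
    show "\<not> countable {A\<in>\<I>. S \<inter> A \<noteq> {}}"
    proof
      assume "countable {A\<in>\<I>. S \<inter> A \<noteq> {}}"
      then have "\<not> {A\<in>\<I>. N A = k} \<subseteq> {A\<in>\<I>. S \<inter> A \<noteq> {}}"
        using N[of k] countable_subset by blast
      then obtain A where A: "A \<in> \<I>" "N A = k" "S \<inter> A = {}"
        by blast
      let ?O = "A - X closure_of (K (Suc k))"
      have "openin X ?O"
        using A(1) \<F>(1) unfolding \<I>_def by (intro openin_diff closedin_closure_of) auto
      moreover have "?O \<noteq> {}"
        using A(1) K(3)[of "Suc k"] unfolding \<I>_def by blast
      moreover have "st k S cover \<inter> A \<subseteq> K (Suc k)"
        using st_cover_Int_subset_K[of A S k] A by simp
      then have "st k S cover \<inter> ?O = {}"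
        using K_subset_closure[of "Suc k"] by blast
      ultimately show False
        using dense unfolding dense_intersects_open by (metis inf_commute)
    qed
  qed
qed

lemma weakly_strongly_omega_star_lindelof_imp_ccc:
  assumes pn: "perfectly_normal X" and wsl: "weakly_strongly_omega_star_lindelof X"
  shows "ccc X"
proof (rule ccontr)
  assume "\<not> ccc X"
  then show False
  proof (rule perfectly_normal_not_ccc_obtains_cover[OF pn])
    fix \<I> \<U> assume \<I>: "\<And>A. A \<in> \<I> \<Longrightarrow> openin X A \<and> A \<noteq> {}" "pairwise disjnt \<I>" and \<U>: "open_cover X \<U>"
      and uncountable_meets: "\<And>k S. X closure_of (st k S \<U>) = topspace X \<Longrightarrow> \<not> countable {A\<in>\<I>. S \<inter> A \<noteq> {}}"
    obtain k B where "countable B" and dense: "X closure_of (st k B \<U>) = topspace X"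
      using wsl \<U> unfolding weakly_strongly_omega_star_lindelof_def by blast
    have "\<exists>A. {C\<in>\<I>. {x} \<inter> C \<noteq> {}} \<subseteq> {A}" for x
    proof (cases "x \<in> \<Union>\<I>")
      case True
      then obtain A where "A \<in> \<I>" "{x} \<subseteq> A"
        by blast
      with \<I>(2) show ?thesis
        by (intro exI pairwise_disjnt_meeting_subset)
    qed blast
    then have "countable {A\<in>\<I>. \<Union>((\<lambda>x. {x}) ` B) \<inter> A \<noteq> {}}"
      using \<open>countable B\<close> by (intro countable_members_meeting_Union) auto
    with uncountable_meets[OF dense] show False
      by simp
  qed
qed

lemma selectively_omega_star_ccc_imp_ccc:
  assumes pn: "perfectly_normal X" and sel: "selectively_omega_star_ccc X"
  shows "ccc X"
proof (rule ccontr)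
  assume "\<not> ccc X"
  then show False
  proof (rule perfectly_normal_not_ccc_obtains_cover[OF pn])
    fix \<I> \<U> assume \<I>: "\<And>A. A \<in> \<I> \<Longrightarrow> openin X A \<and> A \<noteq> {}" "pairwise disjnt \<I>"
      and \<U>: "open_cover X \<U>"
      and uncountable_meets: "\<And>k S. X closure_of (st k S \<U>) = topspace X \<Longrightarrow> \<not> countable {A\<in>\<I>. S \<inter> A \<noteq> {}}"
    obtain \<M> where "\<I> \<subseteq> \<M>" and \<M>: "max_disjoint_open X \<M>"
      using max_disjoint_open_superset[OF \<I>] by blast
    have "\<exists>k\<ge>1. \<exists>A. (\<forall>n::nat. A n \<in> \<M>) \<and> st k (\<Union>n. A n) \<U> = topspace X"
      using sel \<U> \<M> unfolding selectively_omega_star_ccc_def by auto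
    then obtain k and A :: "nat \<Rightarrow> 'a set" where A: "\<And>n. A n \<in> \<M>" "st k (\<Union>n. A n) \<U> = topspace X"
      by blast
    have "pairwise disjnt \<M>"
      using \<M> unfolding max_disjoint_open_def by blast
    then have "{C\<in>\<I>. A n \<inter> C \<noteq> {}} \<subseteq> {A n}" for n
      using pairwise_disjnt_meeting_subset[of \<M> "A n" "A n"] A(1) \<open>\<I> \<subseteq> \<M>\<close> by blast
    then have "countable {C\<in>\<I>. \<Union>(range A) \<inter> C \<noteq> {}}"
      by (intro countable_members_meeting_Union) auto
    moreover have "X closure_of (st k (\<Union>(range A)) \<U>) = topspace X"
      using A(2) by simp
    ultimately show False
      using uncountable_meets by blast
  qed
qed

theorem corollary9:
  fixes X :: "'a topology"
  assumes "perfectly_normal X" and "topspace X \<noteq> {}"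
  shows "(ccc X \<longleftrightarrow> selectively_k_star_ccc 2 X)
       \<and> (ccc X \<longleftrightarrow> selectively_omega_star_ccc X)
       \<and> (ccc X \<longleftrightarrow> weakly_lindelof X)
       \<and> (ccc X \<longleftrightarrow> weakly_k_star_lindelof 1 X)
       \<and> (ccc X \<longleftrightarrow> weakly_omega_star_lindelof X)
       \<and> (ccc X \<longleftrightarrow> weakly_strongly_k_star_lindelof 1 X)
       \<and> (ccc X \<longleftrightarrow> weakly_strongly_omega_star_lindelof X)
       \<and> (ccc X \<longleftrightarrow> k_star_lindelof 1 X)
       \<and> (ccc X \<longleftrightarrow> omega_star_lindelof X)
       \<and> (ccc X \<longleftrightarrow> strongly_k_star_lindelof 2 X)
       \<and> (ccc X \<longleftrightarrow> strongly_omega_star_lindelof X)"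
proof -
  note omega_1 = k_star_properties_imp_omega[of 1, OF order_refl]
    and omega_2 = k_star_properties_imp_omega[of 2, OF one_le_numeral]
    and weakly = star_properties_imp_weakly[where X = X]
  have "weakly_lindelof X \<Longrightarrow> k_star_lindelof 1 X"
    using weakly_k_star_lindelof_imp_k_star_lindelof_Suc[of 0 X]
    unfolding weakly_k_star_lindelof_0_iff by simp
  moreover have "weakly_strongly_k_star_lindelof 1 X \<Longrightarrow> strongly_k_star_lindelof 2 X"
    using weakly_strongly_k_star_lindelof_imp_strongly_Suc[of 1 X] by (simp add: numeral_2_eq_2)
  moreover note ccc_imp_weakly_lindelof[of X] ccc_imp_weakly_strongly_k_star_lindelof_1[of X]
    ccc_imp_selectively_k_star_ccc_2[OF _ assms(2)]
    weakly_omega_star_lindelof_imp_weakly_strongly[of X]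
    weakly_strongly_omega_star_lindelof_imp_ccc[OF assms(1)]
    selectively_omega_star_ccc_imp_ccc[OF assms(1)]
    omega_1[where X = X] omega_2[where X = X] weakly
  ultimately show ?thesis
    by blast
qed

end
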